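(* Let $X$ be a proper CAT(0) space or a disjoint union of countably many proper CAT(0) spaces, endowed with an isometric action of a group $\Gamma$ having discrete orbits. Then $X$ has a locally finite $\Gamma$-good cover $\mathcal{U}$.
   Context: In a disjoint union of metric spaces, points in different pieces are at distance $\infty$. A $\Gamma$-good cover of such $X$ is a cover $\mathcal{U}$ of $X$ by open metric balls such that (1) $\Gamma\cdot\mathcal{U}=\mathcal{U}$, and (2) if $B\in\mathcal{U}$, $\gamma\in\Gamma$ and $\gamma\cdot B\cap B\neq\emptyset$, then $\gamma\cdot B=B$. *)

theory Defs
  imports "HOL-Analysis.Analysis" "HOL-Algebra.Group_Action"
begin

definition proper_ms :: "'a set \<Rightarrow> ('a \<Rightarrow> 'a \<Rightarrow> real) \<Rightarrow> bool" where
  "proper_ms M d \<longleftrightarrow> Metric_space M d \<and>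
     (\<forall>x\<in>M. \<forall>r. compactin (Metric_space.mtopology M d) (Metric_space.mcball M d x r))"

definition geodesic_seg :: "'a set \<Rightarrow> ('a \<Rightarrow> 'a \<Rightarrow> real) \<Rightarrow> (real \<Rightarrow> 'a) \<Rightarrow> 'a \<Rightarrow> 'a \<Rightarrow> bool" where
  "geodesic_seg M d c x y \<longleftrightarrow> c 0 = x \<and> c (d x y) = y \<and>
     (\<forall>s\<in>{0..d x y}. c s \<in> M) \<and>
     (\<forall>s\<in>{0..d x y}. \<forall>t\<in>{0..d x y}. d (c s) (c t) = \<bar>s - t\<bar>)"

text \<open>CAT(0) space (Bridson--Haefliger II.1.1): a geodesic metric space in which every
  geodesic triangle satisfies the CAT(0) comparison inequality with respect to its
  comparison triangle in the Euclidean plane (modelled as the complex plane).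
  It suffices to compare pairs of points lying on two sides [x,y] and [y,z] of an arbitrary
  triangle, since all triangles (with all labelings) are quantified over; points on the same
  side satisfy the inequality with equality.\<close>
definition CAT0 :: "'a set \<Rightarrow> ('a \<Rightarrow> 'a \<Rightarrow> real) \<Rightarrow> bool" where
  "CAT0 M d \<longleftrightarrow> Metric_space M d \<and>
     (\<forall>x\<in>M. \<forall>y\<in>M. \<exists>c. geodesic_seg M d c x y) \<and>
     (\<forall>x\<in>M. \<forall>y\<in>M. \<forall>z\<in>M. \<forall>c1 c2 c3. \<forall>x' y' z' :: complex.
        geodesic_seg M d c1 x y \<and> geodesic_seg M d c2 y z \<and> geodesic_seg M d c3 z x \<and>
        dist x' y' = d x y \<and> dist y' z' = d y z \<and> dist z' x' = d z x \<longrightarrow>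
        (\<forall>s\<in>{0..d x y}. \<forall>t\<in>{0..d y z}.
           d (c1 s) (c2 t) \<le>
           dist (x' + complex_of_real (s / d x y) * (y' - x'))
                (y' + complex_of_real (t / d y z) * (z' - y'))))"

text \<open>The space X is the union of a family P of pairwise disjoint pieces; the
  metric d is only meaningful inside a piece; points in different pieces are at
  distance infinity.\<close>
definition same_piece :: "'a set set \<Rightarrow> 'a \<Rightarrow> 'a \<Rightarrow> bool" where
  "same_piece P x y \<longleftrightarrow> (\<exists>p\<in>P. x \<in> p \<and> y \<in> p)"

definition udist :: "'a set set \<Rightarrow> ('a \<Rightarrow> 'a \<Rightarrow> real) \<Rightarrow> 'a \<Rightarrow> 'a \<Rightarrow> ereal" where
  "udist P d x y = (if same_piece P x y then ereal (d x y) else \<infinity>)"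

definition uball :: "'a set set \<Rightarrow> ('a \<Rightarrow> 'a \<Rightarrow> real) \<Rightarrow> 'a \<Rightarrow> real \<Rightarrow> 'a set" where
  "uball P d x r = {y \<in> \<Union>P. udist P d x y < ereal r}"

definition countable_union_proper_CAT0 :: "'a set set \<Rightarrow> ('a \<Rightarrow> 'a \<Rightarrow> real) \<Rightarrow> bool" where
  "countable_union_proper_CAT0 P d \<longleftrightarrow> countable P \<and> disjoint P \<and> {} \<notin> P \<and>
     (\<forall>p\<in>P. proper_ms p d \<and> CAT0 p d)"

definition isometric_action ::
  "('g, 'm) monoid_scheme \<Rightarrow> ('g \<Rightarrow> 'a \<Rightarrow> 'a) \<Rightarrow> 'a set set \<Rightarrow> ('a \<Rightarrow> 'a \<Rightarrow> real) \<Rightarrow> bool" where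
  "isometric_action G \<phi> P d \<longleftrightarrow> group_action G (\<Union>P) \<phi> \<and>
     (\<forall>g\<in>carrier G. \<forall>x\<in>\<Union>P. \<forall>y\<in>\<Union>P. udist P d (\<phi> g x) (\<phi> g y) = udist P d x y)"

definition discrete_orbits ::
  "('g, 'm) monoid_scheme \<Rightarrow> ('g \<Rightarrow> 'a \<Rightarrow> 'a) \<Rightarrow> 'a set set \<Rightarrow> ('a \<Rightarrow> 'a \<Rightarrow> real) \<Rightarrow> bool" where
  "discrete_orbits G \<phi> P d \<longleftrightarrow>
     (\<forall>x\<in>\<Union>P. \<forall>y\<in>orbit G \<phi> x. \<exists>\<epsilon>>0. \<forall>z\<in>orbit G \<phi> x.
        udist P d y z < ereal \<epsilon> \<longrightarrow> z = y)"

definition good_cover ::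
  "('g, 'm) monoid_scheme \<Rightarrow> ('g \<Rightarrow> 'a \<Rightarrow> 'a) \<Rightarrow> 'a set set \<Rightarrow> ('a \<Rightarrow> 'a \<Rightarrow> real)
     \<Rightarrow> 'a set set \<Rightarrow> bool" where
  "good_cover G \<phi> P d \<U> \<longleftrightarrow>
     (\<forall>B\<in>\<U>. \<exists>x\<in>\<Union>P. \<exists>r>0. B = uball P d x r) \<and>
     \<Union>\<U> = \<Union>P \<and>
     {\<phi> g ` B | g B. g \<in> carrier G \<and> B \<in> \<U>} = \<U> \<and>
     (\<forall>B\<in>\<U>. \<forall>g\<in>carrier G. \<phi> g ` B \<inter> B \<noteq> {} \<longrightarrow> \<phi> g ` B = B)"

definition locally_finite_cover :: "'a set set \<Rightarrow> ('a \<Rightarrow> 'a \<Rightarrow> real) \<Rightarrow> 'a set set \<Rightarrow> bool" where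
  "locally_finite_cover P d \<U> \<longleftrightarrow>
     (\<forall>x\<in>\<Union>P. \<exists>r>0. finite {B\<in>\<U>. B \<inter> uball P d x r \<noteq> {}})"

end

theory Submission
  imports Defs
begin

text \<open>In every G-orbit of pieces choose a reference piece with a base point, and let the
  height of z be the distance from that base point to the orbit of z; it is G-invariant and
  1-Lipschitz. The points of a reference piece at distance at most n + 1 from the base point
  and of height at least n form a compact set, so finitely many balls, each of radius at most
  half the orbit gap of its centre, cover it. The G-translates of all these balls form the
  cover: such a ball is moved either onto itself or off itself, and near a point z only
  translates of balls whose centres have height below height z + 1 occur. These are finitely
  many centres, each with finitely many translates near z because orbits are discrete and the
  pieces are proper.\<close>

lemma (in Metric_space) compactin_finite_mball_cover:
  assumes K: "compactin mtopology K" and "\<And>y. y \<in> K \<Longrightarrow> r y > 0"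
  shows "\<exists>F \<subseteq> K. finite F \<and> K \<subseteq> (\<Union>y\<in>F. mball y (r y))"
proof -
  have "K \<subseteq> M" using K compactin_subset_topspace by fastforce
  then have cover: "K \<subseteq> \<Union>((\<lambda>y. mball y (r y)) ` K)" using assms(2) by force
  have "\<And>U. U \<in> (\<lambda>y. mball y (r y)) ` K \<Longrightarrow> openin mtopology U" by blast
  from compactinD[OF K this cover]
  obtain \<F> where "finite \<F>" "\<F> \<subseteq> (\<lambda>y. mball y (r y)) ` K" "K \<subseteq> \<Union>\<F>" by blast
  moreover from finite_subset_image[OF this(1,2)]
  obtain F where "F \<subseteq> K" "finite F" "\<F> = (\<lambda>y. mball y (r y)) ` F" by blast
  ultimately show ?thesis by blast
qed

lemma (in Metric_space) finite_separated_subset_compactin: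
  assumes K: "compactin mtopology K" and "E \<subseteq> K" and "e > 0"
    and separated: "\<And>a b. a \<in> E \<Longrightarrow> b \<in> E \<Longrightarrow> d a b < e \<Longrightarrow> a = b"
  shows "finite E"
proof -
  obtain F where F: "F \<subseteq> K" "finite F" "K \<subseteq> (\<Union>x\<in>F. mball x (e/2))"
    using compactin_finite_mball_cover[OF K, of "\<lambda>_. e/2"] \<open>e > 0\<close> by auto
  have "\<exists>x\<in>F. a \<in> mball x (e/2)" if "a \<in> E" for a using that \<open>E \<subseteq> K\<close> F(3) by blast
  then obtain c where c: "\<And>a. a \<in> E \<Longrightarrow> c a \<in> F \<and> a \<in> mball (c a) (e/2)" by metis
  have "inj_on c E"
  proof (rule inj_onI)
    fix a b assume a: "a \<in> E" and b: "b \<in> E" and "c a = c b"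
    with c have "d (c a) a < e/2" "d (c a) b < e/2" "c a \<in> M" "a \<in> M" "b \<in> M" by fastforce+
    then have "d a b < e" using triangle''[of a "c a" b] by linarith
    then show "a = b" using separated a b by blast
  qed
  moreover have "c ` E \<subseteq> F" using c by blast
  ultimately show ?thesis using F(2) finite_imageD finite_subset by blast
qed

lemma (in Metric_space) closedin_superlevel_set:
  assumes "\<And>x y. x \<in> M \<Longrightarrow> y \<in> M \<Longrightarrow> h x \<le> h y + d x y"
  shows "closedin mtopology {x \<in> M. c \<le> h x}"
proof -
  have "mball y (c - h y) \<subseteq> M - {x \<in> M. c \<le> h x}" if "y \<in> M" for y
    using assms[OF _ that] commute by fastforce
  then have "openin mtopology (M - {x \<in> M. c \<le> h x})"
    unfolding openin_mtopology
    by (metis (no_types, lifting) Diff_iff diff_gt_0_iff_gt mem_Collect_eq not_le subset_iff)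
  then show ?thesis by (simp add: closedin_def)
qed

locale metric_union =
  fixes P :: "'a set set" and d :: "'a \<Rightarrow> 'a \<Rightarrow> real"
  assumes metric_piece: "p \<in> P \<Longrightarrow> Metric_space p d"
    and disjoint_pieces: "disjoint P"
begin

lemma same_piece_sym: "same_piece P x y \<Longrightarrow> same_piece P y x"
  by (auto simp: same_piece_def)

lemma mem_piece_if_same_piece: "p \<in> P \<Longrightarrow> x \<in> p \<Longrightarrow> same_piece P x y \<Longrightarrow> y \<in> p"
  using disjoint_pieces unfolding same_piece_def disjoint_def by blast

lemma dist_sym_same_piece: "same_piece P x y \<Longrightarrow> d x y = d y x"
  unfolding same_piece_def using metric_piece Metric_space.commute by metis

lemma udist_less_ereal_iff: "udist P d x y < ereal r \<longleftrightarrow> same_piece P x y \<and> d x y < r"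
  by (simp add: udist_def)

lemma mem_uball_iff: "y \<in> uball P d x r \<longleftrightarrow> same_piece P x y \<and> d x y < r"
  by (auto simp: uball_def udist_def same_piece_def)

lemma uball_eq_mball: "p \<in> P \<Longrightarrow> x \<in> p \<Longrightarrow> uball P d x r = Metric_space.mball p d x r"
  using mem_piece_if_same_piece metric_piece Metric_space.in_mball
  by (fastforce simp: mem_uball_iff same_piece_def)

lemma uballs_meet_imp_close:
  assumes "uball P d a r \<inter> uball P d b s \<noteq> {}"
  shows "same_piece P a b \<and> d a b < r + s"
proof -
  obtain w where "same_piece P a w" "d a w < r" "same_piece P b w" "d b w < s"
    using assms by (auto simp: mem_uball_iff)
  moreover from this obtain p where p: "p \<in> P" "a \<in> p" "w \<in> p"
    by (auto simp: same_piece_def)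
  moreover have "b \<in> p"
    using mem_piece_if_same_piece[OF p(1,3)] same_piece_sym \<open>same_piece P b w\<close> by blast
  moreover have "d a b \<le> d a w + d w b"
    using Metric_space.triangle[OF metric_piece] p \<open>b \<in> p\<close> by blast
  ultimately show ?thesis
    using dist_sym_same_piece[of b w] by (auto simp: same_piece_def)
qed

end

locale isometric_union_action = metric_union P d
  for P :: "'a set set" and d :: "'a \<Rightarrow> 'a \<Rightarrow> real" +
  fixes G :: "('g, 'm) monoid_scheme" (structure) and \<phi> :: "'g \<Rightarrow> 'a \<Rightarrow> 'a"
  assumes isometric: "isometric_action G \<phi> P d"
begin

sublocale group_action G "\<Union>P" \<phi>
  using isometric by (simp add: isometric_action_def)

sublocale group G
  using group_hom group_hom.axioms(1) by blast

lemma udist_act: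
  "g \<in> carrier G \<Longrightarrow> x \<in> \<Union>P \<Longrightarrow> y \<in> \<Union>P \<Longrightarrow> udist P d (\<phi> g x) (\<phi> g y) = udist P d x y"
  using isometric unfolding isometric_action_def by blast

lemma same_piece_act_iff:
  "g \<in> carrier G \<Longrightarrow> x \<in> \<Union>P \<Longrightarrow> y \<in> \<Union>P \<Longrightarrow> same_piece P (\<phi> g x) (\<phi> g y) \<longleftrightarrow> same_piece P x y"
  using udist_act[of g x y] by (auto simp: udist_def split: if_splits)

lemma dist_act:
  "g \<in> carrier G \<Longrightarrow> x \<in> \<Union>P \<Longrightarrow> y \<in> \<Union>P \<Longrightarrow> same_piece P x y \<Longrightarrow> d (\<phi> g x) (\<phi> g y) = d x y"
  using udist_act[of g x y] same_piece_act_iff[of g x y] by (auto simp: udist_def)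

lemma act_one: "x \<in> \<Union>P \<Longrightarrow> \<phi> \<one> x = x"
  using id_eq_one by (metis restrict_apply')

lemma act_mem_orbit: "g \<in> carrier G \<Longrightarrow> \<phi> g x \<in> orbit G \<phi> x"
  by (auto simp: orbit_def)

lemma act_closed: "g \<in> carrier G \<Longrightarrow> x \<in> \<Union>P \<Longrightarrow> \<phi> g x \<in> \<Union>P"
  using element_image by blast

lemma orbit_subset: "x \<in> \<Union>P \<Longrightarrow> orbit G \<phi> x \<subseteq> \<Union>P"
  unfolding orbit_def using act_closed by blast

lemma orbit_eq:
  assumes x: "x \<in> \<Union>P" and y: "y \<in> orbit G \<phi> x"
  shows "orbit G \<phi> y = orbit G \<phi> x"
proof -
  have "y \<in> \<Union>P" using orbit_subset[OF x] y by blast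
  moreover have "x \<in> orbit G \<phi> y" using orbit_sym[OF x _ y] \<open>y \<in> \<Union>P\<close> .
  ultimately show ?thesis
    using orbit_trans[OF x] orbit_trans[OF \<open>y \<in> \<Union>P\<close> x] y orbit_subset x by blast
qed

lemma uball_act:
  assumes h: "h \<in> carrier G" and x: "x \<in> \<Union>P"
  shows "\<phi> h ` uball P d x r = uball P d (\<phi> h x) r"
proof
  show "\<phi> h ` uball P d x r \<subseteq> uball P d (\<phi> h x) r"
  proof (rule image_subsetI)
    fix y assume "y \<in> uball P d x r"
    then have "y \<in> \<Union>P" "udist P d x y < ereal r" by (simp_all add: uball_def)
    then show "\<phi> h y \<in> uball P d (\<phi> h x) r"
      using udist_act[OF h x] act_closed[OF h] unfolding uball_def by simp
  qed
  show "uball P d (\<phi> h x) r \<subseteq> \<phi> h ` uball P d x r"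
  proof
    fix w assume w: "w \<in> uball P d (\<phi> h x) r"
    then have "w \<in> \<Union>P" by (simp add: uball_def)
    define v where "v = \<phi> (inv h) w"
    have "v \<in> \<Union>P" and "\<phi> h v = w"
      using act_closed orbit_sym_aux[of "inv h" w] h \<open>w \<in> \<Union>P\<close> by (auto simp: v_def)
    moreover have "udist P d x v = udist P d (\<phi> h x) w"
      using udist_act[OF h x \<open>v \<in> \<Union>P\<close>] \<open>\<phi> h v = w\<close> by simp
    ultimately show "w \<in> \<phi> h ` uball P d x r" using w by (force simp: uball_def)
  qed
qed

end

locale proper_union_action = isometric_union_action +
  assumes proper_piece: "p \<in> P \<Longrightarrow> proper_ms p d"
    and discrete: "discrete_orbits G \<phi> P d"
begin

lemma compactin_mcball:
  assumes "p \<in> P"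
  shows "compactin (Metric_space.mtopology p d) (Metric_space.mcball p d x r)"
proof (cases "x \<in> p")
  case True
  then show ?thesis using proper_piece[OF assms] by (simp add: proper_ms_def)
next
  case False
  then have "Metric_space.mcball p d x r = {}"
    using Metric_space.in_mcball[OF metric_piece[OF assms]] by blast
  then show ?thesis by simp
qed

definition orbit_gap :: "'a \<Rightarrow> real" where
  "orbit_gap y = (SOME e. e > 0 \<and> (\<forall>z\<in>orbit G \<phi> y. udist P d y z < ereal e \<longrightarrow> z = y))"

lemma orbit_gap:
  assumes "y \<in> \<Union>P"
  shows "orbit_gap y > 0" and "\<And>z. z \<in> orbit G \<phi> y \<Longrightarrow> udist P d y z < ereal (orbit_gap y) \<Longrightarrow> z = y"
proof -
  have "\<exists>e>0. \<forall>z\<in>orbit G \<phi> y. udist P d y z < ereal e \<longrightarrow> z = y"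
    using discrete assms orbit_refl unfolding discrete_orbits_def by blast
  from someI_ex[OF this]
  show "orbit_gap y > 0" "\<And>z. z \<in> orbit G \<phi> y \<Longrightarrow> udist P d y z < ereal (orbit_gap y) \<Longrightarrow> z = y"
    unfolding orbit_gap_def by blast+
qed

lemma orbit_separated:
  assumes y: "y \<in> \<Union>P" and a: "a \<in> orbit G \<phi> y" and b: "b \<in> orbit G \<phi> y"
    and close: "same_piece P a b" "d a b < orbit_gap y"
  shows "a = b"
proof -
  obtain g where g: "g \<in> carrier G" "a = \<phi> g y" using a by (auto simp: orbit_def)
  have "b \<in> \<Union>P" using b orbit_subset[OF y] by blast
  define v where "v = \<phi> (inv g) b"
  have "v \<in> \<Union>P" "\<phi> g v = b"
    using act_closed orbit_sym_aux[of "inv g" b] g \<open>b \<in> \<Union>P\<close> by (auto simp: v_def)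
  have "v \<in> orbit G \<phi> y"
    using orbit_eq[OF y b] act_mem_orbit[of "inv g" b] g(1) by (simp add: v_def)
  moreover have "udist P d y v = udist P d a b"
    using udist_act[OF g(1) y \<open>v \<in> \<Union>P\<close>] g(2) \<open>\<phi> g v = b\<close> by simp
  ultimately have "v = y"
    using orbit_gap(2)[OF y] close by (metis udist_less_ereal_iff)
  then show ?thesis using g(2) \<open>\<phi> g v = b\<close> by simp
qed

lemma finite_orbit_inter_uball:
  assumes y: "y \<in> \<Union>P" and z: "z \<in> \<Union>P"
  shows "finite (orbit G \<phi> y \<inter> uball P d z r)"
proof -
  obtain p where p: "p \<in> P" "z \<in> p" using z by blast
  interpret Metric_space p d using metric_piece[OF p(1)] .
  show ?thesis
  proof (rule finite_separated_subset_compactin)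
    show "compactin mtopology (mcball z r)" using compactin_mcball[OF p(1)] .
    show "orbit G \<phi> y \<inter> uball P d z r \<subseteq> mcball z r"
      using uball_eq_mball[OF p] by auto
    show "orbit_gap y > 0" using orbit_gap(1)[OF y] .
    fix a b assume "a \<in> orbit G \<phi> y \<inter> uball P d z r" "b \<in> orbit G \<phi> y \<inter> uball P d z r"
      and "d a b < orbit_gap y"
    then show "a = b"
      using orbit_separated[OF y] uball_eq_mball[OF p] by (auto simp: same_piece_def intro: p(1))
  qed
qed

text \<open>The pieces met by the orbit of z form one G-orbit of pieces; ref_piece z picks a
  representative of it, so ref_piece is constant on pieces and on orbits.\<close>
definition orbit_pieces :: "'a \<Rightarrow> 'a set set" where
  "orbit_pieces z = {q \<in> P. orbit G \<phi> z \<inter> q \<noteq> {}}"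

definition ref_piece :: "'a \<Rightarrow> 'a set" where
  "ref_piece z = (SOME q. q \<in> orbit_pieces z)"

lemma ref_piece:
  assumes "z \<in> \<Union>P"
  shows "ref_piece z \<in> P" and "orbit G \<phi> z \<inter> ref_piece z \<noteq> {}"
proof -
  obtain q where "q \<in> P" "z \<in> q" using assms by blast
  then have "q \<in> orbit_pieces z" using orbit_refl[OF assms] by (auto simp: orbit_pieces_def)
  then have "ref_piece z \<in> orbit_pieces z" unfolding ref_piece_def by (rule someI)
  then show "ref_piece z \<in> P" "orbit G \<phi> z \<inter> ref_piece z \<noteq> {}"
    by (auto simp: orbit_pieces_def)
qed

lemma ref_piece_orbit:
  "z \<in> \<Union>P \<Longrightarrow> w \<in> orbit G \<phi> z \<Longrightarrow> ref_piece w = ref_piece z"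
  unfolding ref_piece_def orbit_pieces_def by (simp only: orbit_eq)

lemma ref_piece_same_piece:
  assumes "same_piece P z z'" and z: "z \<in> \<Union>P" and z': "z' \<in> \<Union>P"
  shows "ref_piece z = ref_piece z'"
proof -
  have "q \<in> orbit_pieces b"
    if "q \<in> orbit_pieces a" "same_piece P a b" "a \<in> \<Union>P" "b \<in> \<Union>P" for a b q
  proof -
    from that obtain g where g: "g \<in> carrier G" "\<phi> g a \<in> q" "q \<in> P"
      by (auto simp: orbit_pieces_def orbit_def)
    then have "\<phi> g b \<in> q"
      using same_piece_act_iff[OF g(1) that(3,4)] that(2) mem_piece_if_same_piece by blast
    then show ?thesis using g act_mem_orbit by (auto simp: orbit_pieces_def)
  qed
  then have "orbit_pieces z = orbit_pieces z'" using assms same_piece_sym by blast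
  then show ?thesis by (simp add: ref_piece_def)
qed

lemma ref_piece_of_mem:
  assumes z: "z \<in> \<Union>P" and y: "y \<in> ref_piece z"
  shows "ref_piece y = ref_piece z"
proof -
  obtain w where w: "w \<in> orbit G \<phi> z" "w \<in> ref_piece z" using ref_piece[OF z] by blast
  then have "same_piece P y w" using y ref_piece(1)[OF z] by (auto simp: same_piece_def)
  moreover have "y \<in> \<Union>P" "w \<in> \<Union>P" using y w(2) ref_piece(1)[OF z] by blast+
  ultimately show ?thesis using ref_piece_same_piece ref_piece_orbit[OF z w(1)] by metis
qed

definition base_point :: "'a set \<Rightarrow> 'a" where
  "base_point p = (SOME x. x \<in> p)"

lemma base_point: "x \<in> p \<Longrightarrow> base_point p \<in> p"
  unfolding base_point_def by (rule someI)

definition height :: "'a \<Rightarrow> real" where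
  "height z = Inf ((\<lambda>w. d (base_point (ref_piece z)) w) ` (orbit G \<phi> z \<inter> ref_piece z))"

lemma height_orbit: "z \<in> \<Union>P \<Longrightarrow> w \<in> orbit G \<phi> z \<Longrightarrow> height w = height z"
  unfolding height_def by (simp only: ref_piece_orbit orbit_eq)

lemma height_le_dist:
  assumes "z \<in> \<Union>P" and "w \<in> orbit G \<phi> z \<inter> ref_piece z"
  shows "height z \<le> d (base_point (ref_piece z)) w"
  unfolding height_def
proof (rule cInf_lower)
  show "bdd_below ((\<lambda>w. d (base_point (ref_piece z)) w) ` (orbit G \<phi> z \<inter> ref_piece z))"
    using Metric_space.nonneg[OF metric_piece[OF ref_piece(1)[OF assms(1)]]]
    by (intro bdd_belowI[where m=0]) blast
qed (use assms(2) in blast)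

lemma height_nonneg: "z \<in> \<Union>P \<Longrightarrow> 0 \<le> height z"
  unfolding height_def
  using ref_piece[of z] Metric_space.nonneg[OF metric_piece[OF ref_piece(1)]]
  by (intro cInf_greatest) auto

lemma height_lessD:
  assumes "z \<in> \<Union>P" and "height z < c"
  shows "\<exists>w\<in>orbit G \<phi> z \<inter> ref_piece z. d (base_point (ref_piece z)) w < c"
  using cInf_lessD[of "(\<lambda>w. d (base_point (ref_piece z)) w) ` (orbit G \<phi> z \<inter> ref_piece z)" c]
    ref_piece(2)[OF assms(1)] assms(2)
  unfolding height_def by blast

lemma height_Lipschitz:
  assumes zz': "same_piece P z z'" and z: "z \<in> \<Union>P" and z': "z' \<in> \<Union>P"
  shows "height z \<le> height z' + d z z'"
proof -
  define p where "p = ref_piece z"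
  have p: "p \<in> P" and "ref_piece z' = p"
    using ref_piece(1)[OF z] ref_piece_same_piece[OF assms] by (simp_all add: p_def)
  interpret Metric_space p d using metric_piece[OF p] .
  have "height z - d z z' \<le> d (base_point p) w'" if w': "w' \<in> orbit G \<phi> z' \<inter> p" for w'
  proof -
    obtain g where g: "g \<in> carrier G" "w' = \<phi> g z'" using w' by (auto simp: orbit_def)
    have "same_piece P (\<phi> g z) w'" using same_piece_act_iff[OF g(1) z z'] zz' g(2) by simp
    then have w: "\<phi> g z \<in> orbit G \<phi> z \<inter> p"
      using act_mem_orbit[OF g(1)] mem_piece_if_same_piece[OF p] same_piece_sym w' by blast
    have "height z \<le> d (base_point p) (\<phi> g z)" using height_le_dist[OF z] w p_def by blast
    also have "\<dots> \<le> d (base_point p) w' + d w' (\<phi> g z)"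
      using triangle base_point[of w' p] w w' by blast
    also have "d w' (\<phi> g z) = d z z'"
      using dist_act[OF g(1) z z' zz'] g(2) w w' commute by simp
    finally show ?thesis by simp
  qed
  then have "height z - d z z' \<le> height z'"
    unfolding height_def[of z'] \<open>ref_piece z' = p\<close>
    using ref_piece(2)[OF z'] \<open>ref_piece z' = p\<close> by (intro cInf_greatest) auto
  then show ?thesis by simp
qed

definition band :: "'a set \<Rightarrow> nat \<Rightarrow> 'a set" where
  "band p n = {y \<in> p. d (base_point p) y \<le> real n + 1 \<and> real n \<le> height y}"

lemma compactin_band:
  assumes p: "p \<in> P"
  shows "compactin (Metric_space.mtopology p d) (band p n)"
proof -
  interpret Metric_space p d using metric_piece[OF p] .
  have "height x \<le> height y + d x y" if "x \<in> p" "y \<in> p" for x y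
    using height_Lipschitz[of x y] p that unfolding same_piece_def by blast
  then have "closedin mtopology {y \<in> p. real n \<le> height y}"
    by (rule closedin_superlevel_set)
  moreover have "band p n = mcball (base_point p) (real n + 1) \<inter> {y \<in> p. real n \<le> height y}"
    using base_point by (auto simp: band_def)
  ultimately show ?thesis
    using closed_compactin[OF compactin_mcball[OF p] Int_lower1 closedin_Int[OF closedin_mcball]]
    by simp
qed

definition radius :: "'a \<Rightarrow> real" where
  "radius y = min (1/2) (orbit_gap y / 2)"

lemma radius_pos: "y \<in> \<Union>P \<Longrightarrow> radius y > 0"
  using orbit_gap(1) by (simp add: radius_def)

definition net :: "'a set \<Rightarrow> nat \<Rightarrow> 'a set" where
  "net p n = (SOME F. F \<subseteq> band p n \<and> finite F \<and> band p n \<subseteq> (\<Union>y\<in>F. uball P d y (radius y)))"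

lemma net:
  assumes p: "p \<in> P"
  shows "net p n \<subseteq> band p n" and "finite (net p n)"
    and "band p n \<subseteq> (\<Union>y\<in>net p n. uball P d y (radius y))"
proof -
  have band_p: "band p n \<subseteq> p" by (auto simp: band_def)
  have "\<exists>F\<subseteq>band p n. finite F \<and> band p n \<subseteq> (\<Union>y\<in>F. Metric_space.mball p d y (radius y))"
    using radius_pos band_p p
    by (intro Metric_space.compactin_finite_mball_cover[OF metric_piece[OF p] compactin_band[OF p]]) blast
  then obtain F where F: "F \<subseteq> band p n" "finite F"
      "band p n \<subseteq> (\<Union>y\<in>F. Metric_space.mball p d y (radius y))"
    by blast
  moreover have "Metric_space.mball p d y (radius y) = uball P d y (radius y)" if "y \<in> F" for y
    using uball_eq_mball[OF p] that F(1) band_p by blast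
  ultimately have "\<exists>F. F \<subseteq> band p n \<and> finite F \<and> band p n \<subseteq> (\<Union>y\<in>F. uball P d y (radius y))"
    by (intro exI[of _ F]) (simp cong: SUP_cong)
  from someI_ex[OF this]
  show "net p n \<subseteq> band p n" "finite (net p n)"
    "band p n \<subseteq> (\<Union>y\<in>net p n. uball P d y (radius y))"
    unfolding net_def by blast+
qed

definition centres :: "'a set" where
  "centres = (\<Union>p\<in>ref_piece ` \<Union>P. \<Union>n. net p n)"

definition orbit_ball_cover :: "'a set set" where
  "orbit_ball_cover = {uball P d a (radius y) | a y. y \<in> centres \<and> a \<in> orbit G \<phi> y}"

lemma centreE:
  assumes "y \<in> centres"
  obtains z n where "z \<in> \<Union>P" "y \<in> net (ref_piece z) n" "y \<in> ref_piece z" "real n \<le> height y"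
proof -
  obtain z n where z: "z \<in> \<Union>P" "y \<in> net (ref_piece z) n"
    using assms unfolding centres_def by blast
  then have "y \<in> band (ref_piece z) n" using net(1)[OF ref_piece(1)[OF z(1)]] by blast
  then show thesis using that z by (simp add: band_def)
qed

lemma centre_in_Union: "y \<in> centres \<Longrightarrow> y \<in> \<Union>P"
  by (metis UnionI centreE ref_piece(1))

lemma orbit_ball_coverE:
  assumes "B \<in> orbit_ball_cover"
  obtains a y where "y \<in> centres" "a \<in> orbit G \<phi> y" "B = uball P d a (radius y)"
  using assms unfolding orbit_ball_cover_def by blast

lemma orbit_ball_cover_uball:
  assumes "B \<in> orbit_ball_cover"
  shows "\<exists>x\<in>\<Union>P. \<exists>r>0. B = uball P d x r"
proof -
  obtain a y where "y \<in> centres" "a \<in> orbit G \<phi> y" "B = uball P d a (radius y)"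
    using assms by (rule orbit_ball_coverE)
  then show ?thesis using centre_in_Union orbit_subset radius_pos by blast
qed

lemma Union_orbit_ball_cover: "\<Union>orbit_ball_cover = \<Union>P"
proof
  show "\<Union>orbit_ball_cover \<subseteq> \<Union>P"
    unfolding orbit_ball_cover_def uball_def by blast
  show "\<Union>P \<subseteq> \<Union>orbit_ball_cover"
  proof
    fix z assume z: "z \<in> \<Union>P"
    define p where "p = ref_piece z"
    define n where "n = nat \<lfloor>height z\<rfloor>"
    have "height z < real n + 1" and "real n \<le> height z"
      using height_nonneg[OF z] unfolding n_def by linarith+
    then obtain w where w: "w \<in> orbit G \<phi> z" "w \<in> p" "d (base_point p) w < real n + 1"
      using height_lessD[OF z] p_def by blast
    have "w \<in> band p n"
      using w height_orbit[OF z w(1)] \<open>real n \<le> height z\<close> by (simp add: band_def)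
    then obtain y where y: "y \<in> net p n" "w \<in> uball P d y (radius y)"
      using net(3)[OF ref_piece(1)[OF z]] p_def by blast
    have "y \<in> centres" using y(1) z p_def unfolding centres_def by blast
    obtain g where g: "g \<in> carrier G" "w = \<phi> g z" using w(1) by (auto simp: orbit_def)
    have "y \<in> \<Union>P" using centre_in_Union[OF \<open>y \<in> centres\<close>] .
    have "z = \<phi> (inv g) w" using orbit_sym_aux[OF g(1) z] g(2) by simp
    then have "z \<in> uball P d (\<phi> (inv g) y) (radius y)"
      using uball_act[OF inv_closed[OF g(1)] \<open>y \<in> \<Union>P\<close>] y(2) by blast
    moreover have "uball P d (\<phi> (inv g) y) (radius y) \<in> orbit_ball_cover"
      using \<open>y \<in> centres\<close> act_mem_orbit[OF inv_closed[OF g(1)]]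
      unfolding orbit_ball_cover_def by blast
    ultimately show "z \<in> \<Union>orbit_ball_cover" by blast
  qed
qed

lemma image_orbit_ball_cover:
  "{\<phi> g ` B | g B. g \<in> carrier G \<and> B \<in> orbit_ball_cover} = orbit_ball_cover"
proof (intro subset_antisym subsetI)
  fix B' assume "B' \<in> {\<phi> g ` B | g B. g \<in> carrier G \<and> B \<in> orbit_ball_cover}"
  then obtain g B where g: "g \<in> carrier G" and B: "B \<in> orbit_ball_cover" and "B' = \<phi> g ` B"
    by blast
  obtain a y where y: "y \<in> centres" "a \<in> orbit G \<phi> y" "B = uball P d a (radius y)"
    using B by (rule orbit_ball_coverE)
  have "y \<in> \<Union>P" "a \<in> \<Union>P" using centre_in_Union[OF y(1)] orbit_subset y(2) by blast+
  have "B' = uball P d (\<phi> g a) (radius y)"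
    using uball_act[OF g \<open>a \<in> \<Union>P\<close>] \<open>B' = \<phi> g ` B\<close> y(3) by simp
  moreover have "\<phi> g a \<in> orbit G \<phi> y"
    using act_mem_orbit[OF g] orbit_eq[OF \<open>y \<in> \<Union>P\<close> y(2)] by blast
  ultimately show "B' \<in> orbit_ball_cover" using y(1) unfolding orbit_ball_cover_def by blast
next
  fix B assume B: "B \<in> orbit_ball_cover"
  then have "B \<subseteq> \<Union>P" unfolding orbit_ball_cover_def uball_def by blast
  then have "\<phi> \<one> ` B = B" using act_one by (simp add: subset_iff)
  then show "B \<in> {\<phi> g ` B | g B. g \<in> carrier G \<and> B \<in> orbit_ball_cover}" using B by blast
qed

lemma orbit_ball_cover_stable:
  assumes B: "B \<in> orbit_ball_cover" and g: "g \<in> carrier G" and meet: "\<phi> g ` B \<inter> B \<noteq> {}"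
  shows "\<phi> g ` B = B"
proof -
  obtain a y where y: "y \<in> centres" "a \<in> orbit G \<phi> y" "B = uball P d a (radius y)"
    using B by (rule orbit_ball_coverE)
  have "y \<in> \<Union>P" "a \<in> \<Union>P" using centre_in_Union[OF y(1)] orbit_subset y(2) by blast+
  have image: "\<phi> g ` B = uball P d (\<phi> g a) (radius y)"
    using uball_act[OF g \<open>a \<in> \<Union>P\<close>] y(3) by simp
  then have "same_piece P (\<phi> g a) a \<and> d (\<phi> g a) a < radius y + radius y"
    using meet y(3) by (intro uballs_meet_imp_close) simp
  moreover have "radius y + radius y \<le> orbit_gap y" unfolding radius_def by linarith
  moreover have "\<phi> g a \<in> orbit G \<phi> y"
    using act_mem_orbit[OF g] orbit_eq[OF \<open>y \<in> \<Union>P\<close> y(2)] by blast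
  ultimately have "\<phi> g a = a" using orbit_separated[OF \<open>y \<in> \<Union>P\<close> _ y(2)] by fastforce
  then show ?thesis using image y(3) by simp
qed

lemma orbit_ball_near_point:
  assumes z: "z \<in> \<Union>P" and B: "B \<in> orbit_ball_cover" and meet: "B \<inter> uball P d z (1/2) \<noteq> {}"
  obtains y a n where "n \<le> nat \<lceil>height z\<rceil>" "y \<in> net (ref_piece z) n"
    "a \<in> orbit G \<phi> y \<inter> uball P d z 1" "B = uball P d a (radius y)"
proof -
  obtain a y where y: "y \<in> centres" "a \<in> orbit G \<phi> y" and B_eq: "B = uball P d a (radius y)"
    using B by (rule orbit_ball_coverE)
  obtain z' n where z': "z' \<in> \<Union>P" "y \<in> net (ref_piece z') n" "y \<in> ref_piece z'"
    and n: "real n \<le> height y"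
    using y(1) by (rule centreE)
  have "y \<in> \<Union>P" "a \<in> \<Union>P" using centre_in_Union[OF y(1)] orbit_subset y(2) by blast+
  have "same_piece P a z \<and> d a z < radius y + 1/2"
    using meet B_eq by (intro uballs_meet_imp_close) simp
  moreover have "radius y \<le> 1/2" by (simp add: radius_def)
  ultimately have az: "same_piece P a z" "d a z < 1" by linarith+
  then have "a \<in> uball P d z 1"
    using same_piece_sym dist_sym_same_piece by (simp add: mem_uball_iff)
  have "ref_piece z' = ref_piece z"
    using ref_piece_of_mem[OF z'(1,3)] ref_piece_orbit[OF \<open>y \<in> \<Union>P\<close> y(2)]
      ref_piece_same_piece[OF az(1) \<open>a \<in> \<Union>P\<close> z] by simp
  have "height y = height a" using height_orbit[OF \<open>y \<in> \<Union>P\<close> y(2)] by simp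
  also have "\<dots> \<le> height z + d a z" using height_Lipschitz[OF az(1) \<open>a \<in> \<Union>P\<close> z] .
  finally have "real n < height z + 1" using n az(2) by linarith
  then have "n \<le> nat \<lceil>height z\<rceil>" by linarith
  moreover have "y \<in> net (ref_piece z) n" using z'(2) \<open>ref_piece z' = ref_piece z\<close> by simp
  ultimately show thesis using that y(2) \<open>a \<in> uball P d z 1\<close> B_eq by blast
qed

lemma locally_finite_orbit_ball_cover: "locally_finite_cover P d orbit_ball_cover"
  unfolding locally_finite_cover_def
proof
  fix z assume z: "z \<in> \<Union>P"
  define Y where "Y = (\<Union>n\<le>nat \<lceil>height z\<rceil>. net (ref_piece z) n)"
  have "finite Y" using net(2)[OF ref_piece(1)[OF z]] by (simp add: Y_def)
  have "Y \<subseteq> \<Union>P" using net(1)[OF ref_piece(1)[OF z]] ref_piece(1)[OF z]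
    unfolding Y_def band_def by blast
  have "finite (SIGMA y:Y. orbit G \<phi> y \<inter> uball P d z 1)"
    using \<open>finite Y\<close>
    by (rule finite_SigmaI) (use \<open>Y \<subseteq> \<Union>P\<close> finite_orbit_inter_uball z in blast)
  then have "finite ((\<lambda>(y, a). uball P d a (radius y)) ` (SIGMA y:Y. orbit G \<phi> y \<inter> uball P d z 1))"
    by (rule finite_imageI)
  moreover have "{B \<in> orbit_ball_cover. B \<inter> uball P d z (1/2) \<noteq> {}}
      \<subseteq> (\<lambda>(y, a). uball P d a (radius y)) ` (SIGMA y:Y. orbit G \<phi> y \<inter> uball P d z 1)"
  proof
    fix B assume "B \<in> {B \<in> orbit_ball_cover. B \<inter> uball P d z (1/2) \<noteq> {}}"
    then obtain y a n where "n \<le> nat \<lceil>height z\<rceil>" "y \<in> net (ref_piece z) n"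
        "a \<in> orbit G \<phi> y \<inter> uball P d z 1" "B = uball P d a (radius y)"
      using orbit_ball_near_point[OF z] by blast
    moreover from this have "(y, a) \<in> (SIGMA y:Y. orbit G \<phi> y \<inter> uball P d z 1)"
      unfolding Y_def by blast
    ultimately show "B \<in> (\<lambda>(y, a). uball P d a (radius y)) ` (SIGMA y:Y. orbit G \<phi> y \<inter> uball P d z 1)"
      by (auto intro: rev_image_eqI)
  qed
  ultimately have "finite {B \<in> orbit_ball_cover. B \<inter> uball P d z (1/2) \<noteq> {}}"
    by (rule finite_subset[rotated])
  then show "\<exists>r>0. finite {B \<in> orbit_ball_cover. B \<inter> uball P d z r \<noteq> {}}"
    by (intro exI[of _ "1/2"]) simp
qed

lemma good_locally_finite_cover_exists:
  "\<exists>\<U>. good_cover G \<phi> P d \<U> \<and> locally_finite_cover P d \<U>"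
proof (intro exI conjI)
  show "good_cover G \<phi> P d orbit_ball_cover"
    unfolding good_cover_def
    by (intro conjI ballI impI orbit_ball_cover_uball Union_orbit_ball_cover
        image_orbit_ball_cover orbit_ball_cover_stable)
qed (rule locally_finite_orbit_ball_cover)

end

theorem proposition4p2:
  fixes G :: "('g, 'm) monoid_scheme" and \<phi> :: "'g \<Rightarrow> 'a \<Rightarrow> 'a"
    and P :: "'a set set" and d :: "'a \<Rightarrow> 'a \<Rightarrow> real"
  assumes "countable_union_proper_CAT0 P d"
    and "isometric_action G \<phi> P d"
    and "discrete_orbits G \<phi> P d"
  shows "\<exists>\<U>. good_cover G \<phi> P d \<U> \<and> locally_finite_cover P d \<U>"
proof -
  have proper: "\<And>p. p \<in> P \<Longrightarrow> proper_ms p d" and "disjoint P"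
    using assms(1) unfolding countable_union_proper_CAT0_def by blast+
  interpret proper_union_action P d G \<phi>
    by (intro proper_union_action.intro isometric_union_action.intro metric_union.intro
        proper_union_action_axioms.intro isometric_union_action_axioms.intro)
      (use proper \<open>disjoint P\<close> assms(2,3) in \<open>simp_all add: proper_ms_def\<close>)
  show ?thesis by (rule good_locally_finite_cover_exists)
qed

end
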